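(* Let $k\ge 2$. For every finite simple graph $G$ admitting a closed neighborhood balanced $k$-coloring and every integer $N\ge 0$, there exist a finite simple graph $G'$ containing $G$ as an induced subgraph, a closed neighborhood balanced $k$-coloring $c'$ of $G'$, and a color $a\in\{1,\dots,k\}$ such that $|c'^{-1}(b)|-|c'^{-1}(a)|\ge N$ for every color $b\neq a$. In particular, there exist graphs with closed neighborhood balanced $k$-colorings having arbitrarily fewer vertices of one color than of each of the other $k-1$ colors.
   Context: For a vertex $v$, $N[v]=\{v\}\cup\{u : uv\in E(G)\}$. A closed neighborhood balanced $k$-coloring of $G$ is a map $c: V(G)\to\{1,\dots,k\}$ such that for every vertex $v$ the numbers $|\{u\in N[v] : c(u)=i\}|$, $i=1,\dots,k$, are all equal. *)

theory Defs
  imports Main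
begin

definition simple_graph :: "'a set \<Rightarrow> 'a set set \<Rightarrow> bool" where
  "simple_graph V E \<longleftrightarrow> finite V \<and>
     (\<forall>e\<in>E. \<exists>u v. u \<noteq> v \<and> u \<in> V \<and> v \<in> V \<and> e = {u, v})"

definition closed_nbhd :: "'a set \<Rightarrow> 'a set set \<Rightarrow> 'a \<Rightarrow> 'a set" where
  "closed_nbhd V E v = insert v {u \<in> V. {u, v} \<in> E}"

definition cnb_coloring :: "nat \<Rightarrow> 'a set \<Rightarrow> 'a set set \<Rightarrow> ('a \<Rightarrow> nat) \<Rightarrow> bool" where
  "cnb_coloring k V E c \<longleftrightarrow> (\<forall>v\<in>V. c v \<in> {1..k}) \<and>
     (\<forall>v\<in>V. \<forall>i\<in>{1..k}. \<forall>j\<in>{1..k}.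
        card {u \<in> closed_nbhd V E v. c u = i} = card {u \<in> closed_nbhd V E v. c u = j})"

definition induced_embedding :: "('a \<Rightarrow> 'b) \<Rightarrow> 'a set \<Rightarrow> 'a set set \<Rightarrow> 'b set \<Rightarrow> 'b set set \<Rightarrow> bool" where
  "induced_embedding f V E V' E' \<longleftrightarrow> inj_on f V \<and> f ` V \<subseteq> V' \<and>
     (\<forall>u\<in>V. \<forall>v\<in>V. {u, v} \<in> E \<longleftrightarrow> {f u, f v} \<in> E')"

end

theory Submission
  imports Defs "HOL-Library.Countable"
begin

text \<open>A closed neighbourhood balanced colouring of a disjoint union of graphs is the same as
one of each part, and each part is an induced subgraph of the union. So it suffices to find, for
every \<open>m\<close>, a balanced \<open>k\<close>-coloured gadget with \<open>m\<close> vertices of colour 1 and \<open>m\<^sup>2\<close>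
of every other colour: \<open>m\<close> hubs of colour 1 forming a clique, each hub joined to \<open>m\<close> disjoint
petals, a petal being a clique with one vertex of each colour \<open>2, \<dots>, k\<close>. A hub sees \<open>m\<close>
hubs and \<open>m\<close> petals, a petal vertex sees its hub and its petal; either way every colour occurs
equally often. Adding the gadget to \<open>G\<close> with \<open>m > N + |V(G)|\<close> creates the required gap.\<close>

lemma simple_graph_edge_subset: "simple_graph V E \<Longrightarrow> e \<in> E \<Longrightarrow> e \<subseteq> V"
  unfolding simple_graph_def by fastforce

lemma closed_nbhd_subset: "v \<in> V \<Longrightarrow> closed_nbhd V E v \<subseteq> V"
  unfolding closed_nbhd_def by auto

lemma cnb_coloringD:
  assumes "cnb_coloring k V E c" "v \<in> V" "i \<in> {1..k}" "j \<in> {1..k}"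
  shows "card {u \<in> closed_nbhd V E v. c u = i} = card {u \<in> closed_nbhd V E v. c u = j}"
  using assms unfolding cnb_coloring_def by blast

lemma cnb_coloring_range: "cnb_coloring k V E c \<Longrightarrow> v \<in> V \<Longrightarrow> c v \<in> {1..k}"
  unfolding cnb_coloring_def by blast

lemma card_image_filter:
  assumes "inj_on f A"
  shows "card {x \<in> f ` A. P x} = card {a \<in> A. P (f a)}"
proof -
  have "{x \<in> f ` A. P x} = f ` {a \<in> A. P (f a)}" by auto
  moreover have "inj_on f {a \<in> A. P (f a)}" using assms by (rule inj_on_subset) auto
  ultimately show ?thesis by (simp add: card_image)
qed

lemma edge_image_iff:
  assumes "simple_graph V E" "inj_on f V" "u \<in> V" "v \<in> V"
  shows "{f u, f v} \<in> (`) f ` E \<longleftrightarrow> {u, v} \<in> E"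
proof
  assume "{f u, f v} \<in> (`) f ` E"
  then obtain e where e: "e \<in> E" "{f u, f v} = f ` e" by auto
  have "{u, v} \<subseteq> V" using assms(3,4) by simp
  moreover have "e \<subseteq> V" using simple_graph_edge_subset[OF assms(1) e(1)] .
  ultimately have "f ` {u, v} = f ` e \<longleftrightarrow> {u, v} = e" by (rule inj_on_image_eq_iff[OF assms(2)])
  with e show "{u, v} \<in> E" by simp
next
  assume "{u, v} \<in> E"
  then show "{f u, f v} \<in> (`) f ` E" using image_eqI[of "{f u, f v}" "(`) f" "{u, v}"] by simp
qed

lemma simple_graph_image:
  assumes "simple_graph V E" "inj_on f V"
  shows "simple_graph (f ` V) ((`) f ` E)"
  unfolding simple_graph_def
proof (intro conjI ballI)
  show "finite (f ` V)" using assms(1) by (simp add: simple_graph_def)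
next
  fix e' assume "e' \<in> (`) f ` E"
  then obtain e where "e \<in> E" "e' = f ` e" by blast
  moreover obtain u v where "u \<noteq> v" "u \<in> V" "v \<in> V" "e = {u, v}"
    using assms(1) \<open>e \<in> E\<close> unfolding simple_graph_def by blast
  moreover have "f u \<noteq> f v" using assms(2) \<open>u \<noteq> v\<close> \<open>u \<in> V\<close> \<open>v \<in> V\<close> by (rule inj_on_contraD)
  ultimately show "\<exists>x y. x \<noteq> y \<and> x \<in> f ` V \<and> y \<in> f ` V \<and> e' = {x, y}" by blast
qed

lemma closed_nbhd_image:
  assumes "simple_graph V E" "inj_on f V" "v \<in> V"
  shows "closed_nbhd (f ` V) ((`) f ` E) (f v) = f ` closed_nbhd V E v"
  using edge_image_iff[OF assms(1,2) _ assms(3)] unfolding closed_nbhd_def by auto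

lemma cnb_coloring_image:
  assumes "simple_graph V E" "inj_on f V" "cnb_coloring k V E (c \<circ> f)"
  shows "cnb_coloring k (f ` V) ((`) f ` E) c"
  unfolding cnb_coloring_def
proof (intro conjI ballI)
  fix x assume "x \<in> f ` V"
  then show "c x \<in> {1..k}" using cnb_coloring_range[OF assms(3)] by auto
next
  fix x i j assume "x \<in> f ` V" "i \<in> {1..k}" "j \<in> {1..k}"
  then obtain v where v: "v \<in> V" "x = f v" by blast
  have inj: "inj_on f (closed_nbhd V E v)"
    using assms(2) closed_nbhd_subset[OF v(1)] by (rule inj_on_subset)
  show "card {u \<in> closed_nbhd (f ` V) ((`) f ` E) x. c u = i}
      = card {u \<in> closed_nbhd (f ` V) ((`) f ` E) x. c u = j}"
    using cnb_coloringD[OF assms(3) v(1) \<open>i \<in> {1..k}\<close> \<open>j \<in> {1..k}\<close>]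
    by (simp add: v(2) closed_nbhd_image[OF assms(1,2) v(1)] card_image_filter[OF inj])
qed

lemma induced_embedding_image:
  assumes "simple_graph V E" "inj_on f V"
  shows "induced_embedding f V E (f ` V) ((`) f ` E)"
  unfolding induced_embedding_def using assms(2) edge_image_iff[OF assms] by blast

lemma simple_graph_Un:
  "simple_graph V1 E1 \<Longrightarrow> simple_graph V2 E2 \<Longrightarrow> simple_graph (V1 \<union> V2) (E1 \<union> E2)"
  unfolding simple_graph_def by (metis Un_iff finite_UnI)

lemma closed_nbhd_Un:
  assumes "V1 \<inter> V2 = {}" "simple_graph V1 E1" "simple_graph V2 E2" "v \<in> V1"
  shows "closed_nbhd (V1 \<union> V2) (E1 \<union> E2) v = closed_nbhd V1 E1 v"
  using assms simple_graph_edge_subset[OF assms(2)] simple_graph_edge_subset[OF assms(3)]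
  unfolding closed_nbhd_def by blast

lemma cnb_coloring_Un:
  assumes "V1 \<inter> V2 = {}" "simple_graph V1 E1" "simple_graph V2 E2"
    and "cnb_coloring k V1 E1 c" "cnb_coloring k V2 E2 c"
  shows "cnb_coloring k (V1 \<union> V2) (E1 \<union> E2) c"
  unfolding cnb_coloring_def
proof (intro conjI ballI)
  fix v assume "v \<in> V1 \<union> V2"
  then show "c v \<in> {1..k}"
    using cnb_coloring_range[OF assms(4)] cnb_coloring_range[OF assms(5)] by blast
next
  fix v i j assume v: "v \<in> V1 \<union> V2" and ij: "i \<in> {1..k}" "j \<in> {1..k}"
  show "card {u \<in> closed_nbhd (V1 \<union> V2) (E1 \<union> E2) v. c u = i}
      = card {u \<in> closed_nbhd (V1 \<union> V2) (E1 \<union> E2) v. c u = j}"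
  proof (cases "v \<in> V1")
    case True
    show ?thesis unfolding closed_nbhd_Un[OF assms(1-3) True] by (rule cnb_coloringD[OF assms(4) True ij])
  next
    case False
    with v have "v \<in> V2" by blast
    have "V2 \<inter> V1 = {}" using assms(1) by blast
    from closed_nbhd_Un[OF this assms(3,2) \<open>v \<in> V2\<close>]
    have "closed_nbhd (V1 \<union> V2) (E1 \<union> E2) v = closed_nbhd V2 E2 v"
      unfolding Un_commute[of V1] Un_commute[of E1] .
    then show ?thesis using cnb_coloringD[OF assms(5) \<open>v \<in> V2\<close> ij] by (simp only:)
  qed
qed

lemma induced_embedding_Un:
  assumes "induced_embedding f V E V1 E1" "simple_graph V2 E2" "f ` V \<inter> V2 = {}"
  shows "induced_embedding f V E (V1 \<union> V2) (E1 \<union> E2)"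
proof -
  have "{f u, f v} \<notin> E2" if "u \<in> V" "v \<in> V" for u v
    using simple_graph_edge_subset[OF assms(2)] assms(3) that by blast
  then show ?thesis using assms(1) unfolding induced_embedding_def by blast
qed

definition sum_edges :: "'a set set \<Rightarrow> 'b set set \<Rightarrow> ('a + 'b) set set" where
  "sum_edges E1 E2 = (`) Inl ` E1 \<union> (`) Inr ` E2"

lemma simple_graph_Plus:
  "simple_graph V1 E1 \<Longrightarrow> simple_graph V2 E2 \<Longrightarrow> simple_graph (V1 <+> V2) (sum_edges E1 E2)"
  unfolding Plus_def sum_edges_def by (intro simple_graph_Un simple_graph_image) auto

lemma cnb_coloring_Plus:
  assumes "simple_graph V1 E1" "simple_graph V2 E2"
    and "cnb_coloring k V1 E1 c1" "cnb_coloring k V2 E2 c2"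
  shows "cnb_coloring k (V1 <+> V2) (sum_edges E1 E2) (case_sum c1 c2)"
  unfolding Plus_def sum_edges_def
  using assms by (intro cnb_coloring_Un simple_graph_image cnb_coloring_image) (auto simp: comp_def)

lemma induced_embedding_Inl_Plus:
  assumes "simple_graph V1 E1" "simple_graph V2 E2"
  shows "induced_embedding Inl V1 E1 (V1 <+> V2) (sum_edges E1 E2)"
  unfolding Plus_def sum_edges_def
  using assms by (intro induced_embedding_Un induced_embedding_image simple_graph_image) auto

lemma card_color_class_Plus:
  assumes "finite V1" "finite V2"
  shows "card {x \<in> V1 <+> V2. case_sum c1 c2 x = b} = card {v \<in> V1. c1 v = b} + card {v \<in> V2. c2 v = b}"
proof -
  have "{x \<in> V1 <+> V2. case_sum c1 c2 x = b} = {v \<in> V1. c1 v = b} <+> {v \<in> V2. c2 v = b}" by auto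
  then show ?thesis using assms by (simp add: card_Plus)
qed

definition rel_edges :: "'a set \<Rightarrow> ('a \<Rightarrow> 'a \<Rightarrow> bool) \<Rightarrow> 'a set set" where
  "rel_edges V R = {{x, y} | x y. x \<in> V \<and> y \<in> V \<and> x \<noteq> y \<and> R x y}"

lemma simple_graph_rel_edges: "finite V \<Longrightarrow> simple_graph V (rel_edges V R)"
  unfolding simple_graph_def rel_edges_def by blast

lemma closed_nbhd_rel_edges:
  assumes "symp R" "reflp R" "v \<in> V"
  shows "closed_nbhd V (rel_edges V R) v = {u \<in> V. R u v}"
proof -
  have "{u, v} \<in> rel_edges V R \<longleftrightarrow> u \<in> V \<and> u \<noteq> v \<and> R u v" for u
    using assms unfolding rel_edges_def by (auto simp: doubleton_eq_iff dest: sympD)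
  then show ?thesis using assms unfolding closed_nbhd_def by (auto dest: reflpD)
qed

text \<open>\<open>(i, 0, 1)\<close> is the \<open>i\<close>-th hub, \<open>(i, l, j)\<close> with \<open>l \<ge> 1\<close> is the vertex of colour
\<open>j\<close> in the \<open>l\<close>-th petal of that hub.\<close>

definition gadget_vertices :: "nat \<Rightarrow> nat \<Rightarrow> (nat \<times> nat \<times> nat) set" where
  "gadget_vertices k m =
     {(i, 0, 1) | i. i < m} \<union> {(i, l, j) | i l j. i < m \<and> l \<in> {1..m} \<and> j \<in> {2..k}}"

fun gadget_adj :: "nat \<times> nat \<times> nat \<Rightarrow> nat \<times> nat \<times> nat \<Rightarrow> bool" where
  "gadget_adj (i, l, _) (i', l', _) \<longleftrightarrow> l = 0 \<and> l' = 0 \<or> i = i' \<and> (l = 0 \<or> l' = 0 \<or> l = l')"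

definition gadget_edges :: "nat \<Rightarrow> nat \<Rightarrow> (nat \<times> nat \<times> nat) set set" where
  "gadget_edges k m = rel_edges (gadget_vertices k m) gadget_adj"

fun gadget_color :: "nat \<times> nat \<times> nat \<Rightarrow> nat" where
  "gadget_color (_, _, j) = j"

lemma simple_graph_gadget: "simple_graph (gadget_vertices k m) (gadget_edges k m)"
proof -
  have "gadget_vertices k m \<subseteq> {..<m} \<times> {..m} \<times> {..Suc k}" unfolding gadget_vertices_def by auto
  then have "finite (gadget_vertices k m)" by (rule finite_subset) auto
  then show ?thesis unfolding gadget_edges_def by (rule simple_graph_rel_edges)
qed

lemma gadget_nbhd_color_count:
  assumes "(i, l, j) \<in> gadget_vertices k m" "b \<in> {1..k}"
  shows "card {u \<in> closed_nbhd (gadget_vertices k m) (gadget_edges k m) (i, l, j). gadget_color u = b}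
       = (if l = 0 then m else 1)"
proof -
  let ?S = "{u \<in> gadget_vertices k m. gadget_adj u (i, l, j) \<and> gadget_color u = b}"
  have "symp gadget_adj" "reflp gadget_adj" by (auto intro!: sympI reflpI)
  then have nbhd: "{u \<in> closed_nbhd (gadget_vertices k m) (gadget_edges k m) (i, l, j). gadget_color u = b}
      = ?S"
    using assms(1) unfolding gadget_edges_def by (simp add: closed_nbhd_rel_edges)
  consider "l = 0" "b = 1" | "l = 0" "b \<noteq> 1" | "l \<noteq> 0" "b = 1" | "l \<noteq> 0" "b \<noteq> 1" by blast
  then show ?thesis
  proof cases
    case 1
    then have "?S = (\<lambda>i'. (i', 0, 1)) ` {..<m}"
      unfolding gadget_vertices_def by auto
    then show ?thesis using 1 nbhd by (simp add: card_image inj_on_def)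
  next
    case 2
    then have "?S = (\<lambda>l'. (i, l', b)) ` {1..m}"
      using assms unfolding gadget_vertices_def by auto
    then show ?thesis using 2 nbhd by (simp add: card_image inj_on_def)
  next
    case 3
    then have "?S = {(i, 0, 1)}"
      using assms unfolding gadget_vertices_def by auto
    then show ?thesis using 3 nbhd by simp
  next
    case 4
    then have "?S = {(i, l, b)}"
      using assms unfolding gadget_vertices_def by auto
    then show ?thesis using 4 nbhd by simp
  qed
qed

lemma cnb_coloring_gadget:
  assumes "1 \<le> k"
  shows "cnb_coloring k (gadget_vertices k m) (gadget_edges k m) gadget_color"
  unfolding cnb_coloring_def
proof (intro conjI ballI)
  fix v assume "v \<in> gadget_vertices k m"
  then show "gadget_color v \<in> {1..k}" using assms unfolding gadget_vertices_def by auto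
next
  fix v i j assume "v \<in> gadget_vertices k m" "i \<in> {1..k}" "j \<in> {1..k}"
  then show "card {u \<in> closed_nbhd (gadget_vertices k m) (gadget_edges k m) v. gadget_color u = i}
      = card {u \<in> closed_nbhd (gadget_vertices k m) (gadget_edges k m) v. gadget_color u = j}"
    by (cases v) (simp add: gadget_nbhd_color_count)
qed

lemma card_gadget_color_1: "card {v \<in> gadget_vertices k m. gadget_color v = 1} = m"
proof -
  have "{v \<in> gadget_vertices k m. gadget_color v = 1} = (\<lambda>i. (i, 0, 1)) ` {..<m}"
    unfolding gadget_vertices_def by auto
  then show ?thesis by (simp add: card_image inj_on_def)
qed

lemma card_gadget_color_ge_2:
  assumes "b \<in> {2..k}"
  shows "card {v \<in> gadget_vertices k m. gadget_color v = b} = m * m"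
proof -
  have "{v \<in> gadget_vertices k m. gadget_color v = b} = (\<lambda>(i, l). (i, l, b)) ` ({..<m} \<times> {1..m})"
    using assms unfolding gadget_vertices_def by (force simp: image_iff)
  moreover have "inj_on (\<lambda>(i, l). (i, l, b)) ({..<m} \<times> {1..m})" by (auto simp: inj_on_def)
  ultimately show ?thesis by (simp add: card_image card_cartesian_product)
qed

lemma exists_cnb_coloring_class_sizes:
  assumes "1 \<le> k"
  shows "\<exists>(V :: nat set) E c. simple_graph V E \<and> cnb_coloring k V E c \<and>
           card {v \<in> V. c v = 1} = m \<and> (\<forall>b\<in>{2..k}. card {v \<in> V. c v = b} = m * m)"
proof (intro exI conjI ballI)
  let ?V = "gadget_vertices k m" and ?c = "gadget_color \<circ> from_nat"
  have inj: "inj_on to_nat ?V" by (simp add: inj_on_def)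
  show "simple_graph (to_nat ` ?V) ((`) to_nat ` gadget_edges k m)"
    using simple_graph_gadget inj by (rule simple_graph_image)
  show "cnb_coloring k (to_nat ` ?V) ((`) to_nat ` gadget_edges k m) ?c"
  proof (rule cnb_coloring_image[OF simple_graph_gadget inj])
    have "?c \<circ> to_nat = gadget_color" by (simp add: comp_def)
    then show "cnb_coloring k ?V (gadget_edges k m) (?c \<circ> to_nat)"
      using cnb_coloring_gadget[OF assms] by simp
  qed
  show "card {v \<in> to_nat ` ?V. ?c v = 1} = m"
    using card_gadget_color_1[of k m] by (simp add: card_image_filter[OF inj])
  fix b assume "b \<in> {2..k}"
  then show "card {v \<in> to_nat ` ?V. ?c v = b} = m * m"
    by (simp add: card_image_filter[OF inj] card_gadget_color_ge_2)
qed

lemma square_gap: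
  assumes "m = nat N + n + 1" "y \<le> n"
  shows "N \<le> int (x + m * m) - int (y + m)"
proof -
  have "int m - 1 \<le> int (m * m) - int m" by (cases m) auto
  moreover have "N \<le> int m - 1 - int n" using assms(1) by simp
  moreover have "int y \<le> int n" using assms(2) by simp
  ultimately show ?thesis unfolding of_nat_add by linarith
qed

lemma cnb_supergraph_with_color_gap:
  fixes V :: "'a set" and N :: int
  assumes "1 \<le> k" "simple_graph V E" "cnb_coloring k V E c"
  shows "\<exists>(V' :: ('a + nat) set) E' c'.
    simple_graph V' E' \<and> induced_embedding Inl V E V' E' \<and> cnb_coloring k V' E' c' \<and>
    (\<forall>b\<in>{1..k}. b \<noteq> 1 \<longrightarrow> N \<le> int (card {v \<in> V'. c' v = b}) - int (card {v \<in> V'. c' v = 1}))"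
proof -
  define m where "m = nat N + card V + 1"
  obtain V2 :: "nat set" and E2 c2 where G2: "simple_graph V2 E2" "cnb_coloring k V2 E2 c2"
    and count_1: "card {v \<in> V2. c2 v = 1} = m"
    and count_b: "\<forall>b\<in>{2..k}. card {v \<in> V2. c2 v = b} = m * m"
    using exists_cnb_coloring_class_sizes[OF assms(1)] by blast
  have fin: "finite V" "finite V2" using assms(2) G2(1) by (simp_all add: simple_graph_def)
  have "card {v \<in> V. c v = 1} \<le> card V" using fin by (intro card_mono) auto
  then have "N \<le> int (card {x \<in> V <+> V2. case_sum c c2 x = b})
      - int (card {x \<in> V <+> V2. case_sum c c2 x = 1})" if "b \<in> {1..k}" "b \<noteq> 1" for b
    using that count_1 count_b square_gap[OF m_def]
    by (simp add: card_color_class_Plus[OF fin])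
  then show ?thesis
    using simple_graph_Plus[OF assms(2) G2(1)] induced_embedding_Inl_Plus[OF assms(2) G2(1)]
      cnb_coloring_Plus[OF assms(2) G2(1) assms(3) G2(2)]
    by blast
qed

lemma cnb_graph_with_color_gap:
  fixes N :: int
  assumes "1 \<le> k"
  shows "\<exists>(V :: nat set) E c. simple_graph V E \<and> cnb_coloring k V E c \<and>
    (\<forall>b\<in>{1..k}. b \<noteq> 1 \<longrightarrow> N \<le> int (card {v \<in> V. c v = b}) - int (card {v \<in> V. c v = 1}))"
proof -
  define m where "m = nat N + 1"
  obtain V :: "nat set" and E c where "simple_graph V E" "cnb_coloring k V E c"
    and count_1: "card {v \<in> V. c v = 1} = m"
    and count_b: "\<forall>b\<in>{2..k}. card {v \<in> V. c v = b} = m * m"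
    using exists_cnb_coloring_class_sizes[OF assms] by blast
  moreover have "N \<le> int (card {v \<in> V. c v = b}) - int (card {v \<in> V. c v = 1})"
    if "b \<in> {1..k}" "b \<noteq> 1" for b
    using that count_1 count_b square_gap[of m N 0 0 0] by (simp add: m_def)
  ultimately show ?thesis by blast
qed

theorem corollary2p14:
  fixes k :: nat
  assumes "k \<ge> 2"
  shows "(\<forall>(V :: 'a set) E c (N :: int). simple_graph V E \<and> cnb_coloring k V E c \<and> N \<ge> 0 \<longrightarrow>
            (\<exists>(V' :: ('a + nat) set) E' f c' a.
               simple_graph V' E' \<and> induced_embedding f V E V' E' \<and> cnb_coloring k V' E' c' \<and>
               a \<in> {1..k} \<and>
               (\<forall>b\<in>{1..k}. b \<noteq> a \<longrightarrow>
                  int (card {v \<in> V'. c' v = b}) - int (card {v \<in> V'. c' v = a}) \<ge> N)))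
       \<and> (\<forall>N :: int. \<exists>(V :: nat set) E c a.
            simple_graph V E \<and> cnb_coloring k V E c \<and> a \<in> {1..k} \<and>
            (\<forall>b\<in>{1..k}. b \<noteq> a \<longrightarrow>
               int (card {v \<in> V. c v = b}) - int (card {v \<in> V. c v = a}) \<ge> N))"
proof -
  have k: "1 \<le> k" and one: "(1 :: nat) \<in> {1..k}" using assms by simp_all
  show ?thesis
    using cnb_supergraph_with_color_gap[OF k] cnb_graph_with_color_gap[OF k] one by blast
qed

end
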